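(* In the privacy game, let $(\alpha^0,\beta^0)\in A\times B$ be arbitrary and let $\{(\alpha^k,\beta^k)\}_{k\in\mathbb{N}}$ be generated by the following best-response dynamics: for $k=1,2,\dots$, if $k$ is even, choose $\alpha^k\in\arg\min_{\alpha\in A}U(\alpha,\beta^{k-1})$ and set $\beta^k=\beta^{k-1}$; if $k$ is odd, choose $\beta^k\in\arg\min_{\beta\in B}V(\alpha^{k-1},\beta)$ and set $\alpha^k=\alpha^{k-1}$. Then for every $\epsilon>0$ there exists $K_\epsilon\in\mathbb{N}$ such that $(\alpha^k,\beta^k)\in\mathcal{N}_\epsilon$ for all $k\ge K_\epsilon$, where $\mathcal{N}_\epsilon=\{(\alpha,\beta)\in A\times B: U(\alpha,\beta)\le U(\alpha',\beta)+\epsilon\ \forall\alpha'\in A,\ V(\alpha,\beta)\le V(\alpha,\beta')+\epsilon\ \forall\beta'\in B\}$ is the set of $\epsilon$-Nash equilibria.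
   Context: Privacy game. $\mathcal{X},\mathcal{W},\mathcal{Y}$ are finite nonempty sets; $p$ is a joint probability mass function of $(X,Z,W)$ on $\mathcal{X}\times\mathcal{X}\times\mathcal{W}$; $d:\mathcal{X}\times\mathcal{X}\to\mathbb{R}_{\ge 0}$; $\varrho$ is a real constant (privacy ratio). Sender policies: $A=\{\alpha=(\alpha_{yzw}):\alpha_{yzw}\in[0,1],\ \sum_{y\in\mathcal{Y}}\alpha_{yzw}=1\ \forall (z,w)\in\mathcal{X}\times\mathcal{W}\}$, with $\alpha_{yzw}=\mathbb{P}\{Y=y\mid Z=z,W=w\}$. Receiver policies: $B=\{\beta=(\beta_{\hat x y}):\beta_{\hat x y}\in[0,1],\ \sum_{\hat x\in\mathcal{X}}\beta_{\hat x y}=1\ \forall y\in\mathcal{Y}\}$, with $\beta_{\hat x y}=\mathbb{P}\{\hat X=\hat x\mid Y=y\}$. Define $\xi(\alpha,\beta)=\sum_{x,\hat x\in\mathcal{X}}\sum_{y\in\mathcal{Y}}\sum_{z\in\mathcal{X}}\sum_{w\in\mathcal{W}}d(x,\hat x)\beta_{\hat x y}\alpha_{yzw}p(x,z,w)$ (the expected distortion $\mathbb{E}\{d(X,\hat X)\}$) and $\zeta(\alpha)=\sum_{y,w}P_{yw}\log\frac{P_{yw}}{P_y P_w}$ (with $0\log 0=0$), where $P_{yw}=\sum_{z,x}\alpha_{yzw}p(x,z,w)$, $P_y=\sum_{w}P_{yw}$, $P_w=\sum_{z,x}p(x,z,w)$ (the mutual information $I(Y;W)$). Sender cost $U(\alpha,\beta)=\xi(\alpha,\beta)+\varrho\zeta(\alpha)$;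 receiver cost $V(\alpha,\beta)=\xi(\alpha,\beta)$. *)

theory Defs
  imports Complex_Main
begin

text \<open>Finite sets X, W, Y are modelled by finite types 'x, 'w, 'y.
  Sender policy alpha y z w = P(Y=y | Z=z, W=w); receiver policy beta xh y = P(Xhat=xh | Y=y);
  p x z w is the joint pmf of (X,Z,W).\<close>

definition sender_policies :: "('y::finite \<Rightarrow> 'x::finite \<Rightarrow> 'w::finite \<Rightarrow> real) set" where
  "sender_policies = {\<alpha>. (\<forall>y z w. 0 \<le> \<alpha> y z w \<and> \<alpha> y z w \<le> 1) \<and>
                          (\<forall>z w. (\<Sum>y\<in>UNIV. \<alpha> y z w) = 1)}"

definition receiver_policies :: "('x::finite \<Rightarrow> 'y::finite \<Rightarrow> real) set" where
  "receiver_policies = {\<beta>. (\<forall>xh y. 0 \<le> \<beta> xh y \<and> \<beta> xh y \<le> 1) \<and>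
                          (\<forall>y. (\<Sum>xh\<in>UNIV. \<beta> xh y) = 1)}"

definition xi :: "('x::finite \<Rightarrow> 'x \<Rightarrow> 'w::finite \<Rightarrow> real) \<Rightarrow> ('x \<Rightarrow> 'x \<Rightarrow> real)
    \<Rightarrow> ('y::finite \<Rightarrow> 'x \<Rightarrow> 'w \<Rightarrow> real) \<Rightarrow> ('x \<Rightarrow> 'y \<Rightarrow> real) \<Rightarrow> real" where
  "xi p d \<alpha> \<beta> = (\<Sum>x\<in>UNIV. \<Sum>xh\<in>UNIV. \<Sum>y\<in>UNIV. \<Sum>z\<in>UNIV. \<Sum>w\<in>UNIV.
      d x xh * \<beta> xh y * \<alpha> y z w * p x z w)"

definition P_yw :: "('x::finite \<Rightarrow> 'x \<Rightarrow> 'w::finite \<Rightarrow> real)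
    \<Rightarrow> ('y::finite \<Rightarrow> 'x \<Rightarrow> 'w \<Rightarrow> real) \<Rightarrow> 'y \<Rightarrow> 'w \<Rightarrow> real" where
  "P_yw p \<alpha> y w = (\<Sum>z\<in>UNIV. \<Sum>x\<in>UNIV. \<alpha> y z w * p x z w)"

definition P_y :: "('x::finite \<Rightarrow> 'x \<Rightarrow> 'w::finite \<Rightarrow> real)
    \<Rightarrow> ('y::finite \<Rightarrow> 'x \<Rightarrow> 'w \<Rightarrow> real) \<Rightarrow> 'y \<Rightarrow> real" where
  "P_y p \<alpha> y = (\<Sum>w\<in>UNIV. P_yw p \<alpha> y w)"

definition P_w :: "('x::finite \<Rightarrow> 'x \<Rightarrow> 'w::finite \<Rightarrow> real) \<Rightarrow> 'w \<Rightarrow> real" where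
  "P_w p w = (\<Sum>z\<in>UNIV. \<Sum>x\<in>UNIV. p x z w)"

text \<open>Mutual information I(Y;W) with the convention 0 log 0 = 0 (natural logarithm).\<close>
definition zeta :: "('x::finite \<Rightarrow> 'x \<Rightarrow> 'w::finite \<Rightarrow> real)
    \<Rightarrow> ('y::finite \<Rightarrow> 'x \<Rightarrow> 'w \<Rightarrow> real) \<Rightarrow> real" where
  "zeta p \<alpha> = (\<Sum>y\<in>UNIV. \<Sum>w\<in>UNIV.
      (if P_yw p \<alpha> y w = 0 then 0
       else P_yw p \<alpha> y w * ln (P_yw p \<alpha> y w / (P_y p \<alpha> y * P_w p w))))"

definition sender_cost :: "('x::finite \<Rightarrow> 'x \<Rightarrow> 'w::finite \<Rightarrow> real) \<Rightarrow> ('x \<Rightarrow> 'x \<Rightarrow> real) \<Rightarrow> real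
    \<Rightarrow> ('y::finite \<Rightarrow> 'x \<Rightarrow> 'w \<Rightarrow> real) \<Rightarrow> ('x \<Rightarrow> 'y \<Rightarrow> real) \<Rightarrow> real" where
  "sender_cost p d \<rho> \<alpha> \<beta> = xi p d \<alpha> \<beta> + \<rho> * zeta p \<alpha>"

definition receiver_cost :: "('x::finite \<Rightarrow> 'x \<Rightarrow> 'w::finite \<Rightarrow> real) \<Rightarrow> ('x \<Rightarrow> 'x \<Rightarrow> real)
    \<Rightarrow> ('y::finite \<Rightarrow> 'x \<Rightarrow> 'w \<Rightarrow> real) \<Rightarrow> ('x \<Rightarrow> 'y \<Rightarrow> real) \<Rightarrow> real" where
  "receiver_cost p d \<alpha> \<beta> = xi p d \<alpha> \<beta>"

definition eps_nash :: "('x::finite \<Rightarrow> 'x \<Rightarrow> 'w::finite \<Rightarrow> real) \<Rightarrow> ('x \<Rightarrow> 'x \<Rightarrow> real) \<Rightarrow> real \<Rightarrow> real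
    \<Rightarrow> (('y::finite \<Rightarrow> 'x \<Rightarrow> 'w \<Rightarrow> real) \<times> ('x \<Rightarrow> 'y \<Rightarrow> real)) set" where
  "eps_nash p d \<rho> \<epsilon> = {(\<alpha>, \<beta>). \<alpha> \<in> sender_policies \<and> \<beta> \<in> receiver_policies \<and>
      (\<forall>\<alpha>'\<in>sender_policies. sender_cost p d \<rho> \<alpha> \<beta> \<le> sender_cost p d \<rho> \<alpha>' \<beta> + \<epsilon>) \<and>
      (\<forall>\<beta>'\<in>receiver_policies. receiver_cost p d \<alpha> \<beta> \<le> receiver_cost p d \<alpha> \<beta>' + \<epsilon>)}"

end

theory Submission imports Defs begin

text \<open>The sender's cost U is an exact potential for the game: for fixed \<alpha> the receiver's
  cost V differs from U only by the constant \<rho> I(Y;W). Alternating best responses therefore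
  never increase U, and U is bounded below on A \<times> B because distortions are nonnegative and
  I(Y;W) is bounded. So U converges along the dynamics and its one-step decrease tends to 0.
  At step k the player who has just moved is exactly optimal, while the other player could gain
  at most what the next best response gains, which is the vanishing decrease of U.\<close>

locale alternating_minimization =
  fixes A :: "'a set" and B :: "'b set" and f :: "'a \<Rightarrow> 'b \<Rightarrow> real" and c :: real
    and as :: "nat \<Rightarrow> 'a" and bs :: "nat \<Rightarrow> 'b"
  assumes bounded_below: "\<And>a b. a \<in> A \<Longrightarrow> b \<in> B \<Longrightarrow> c \<le> f a b"
    and init: "as 0 \<in> A" "bs 0 \<in> B"
    and even_step: "\<And>k. k \<ge> 1 \<Longrightarrow> even k \<Longrightarrow>
        as k \<in> A \<and> (\<forall>a\<in>A. f (as k) (bs (k - 1)) \<le> f a (bs (k - 1))) \<and> bs k = bs (k - 1)"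
    and odd_step: "\<And>k. odd k \<Longrightarrow>
        bs k \<in> B \<and> (\<forall>b\<in>B. f (as (k - 1)) (bs k) \<le> f (as (k - 1)) b) \<and> as k = as (k - 1)"
begin

definition objective :: "nat \<Rightarrow> real" where
  "objective k = f (as k) (bs k)"

lemma iterates_in: "as k \<in> A \<and> bs k \<in> B"
proof (induction k)
  case 0
  then show ?case using init by simp
next
  case (Suc k)
  then show ?case using even_step[of "Suc k"] odd_step[of "Suc k"] by (cases "even (Suc k)") auto
qed

lemma objective_Suc_le: "objective (Suc k) \<le> objective k"
proof (cases "even (Suc k)")
  case True
  then show ?thesis using even_step[of "Suc k"] iterates_in[of k] by (auto simp: objective_def)
next
  case False
  then show ?thesis using odd_step[of "Suc k"] iterates_in[of k] by (auto simp: objective_def)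
qed

lemma objective_decrease_tendsto_zero: "(\<lambda>k. objective k - objective (Suc k)) \<longlonglongrightarrow> 0"
proof -
  have "decseq objective" by (simp add: decseq_SucI objective_Suc_le)
  moreover have "c \<le> objective k" for k
    using bounded_below iterates_in by (simp add: objective_def)
  ultimately obtain L where "objective \<longlonglongrightarrow> L" using decseq_convergent by blast
  then show ?thesis using tendsto_diff[OF _ LIMSEQ_Suc] by fastforce
qed

text \<open>An even step is an exact best response of the first player; after an odd step the
  first player's next move bounds what a deviation could gain.\<close>
lemma first_player_gap:
  assumes "k \<ge> 1" "a \<in> A"
  shows "f (as k) (bs k) \<le> f a (bs k) + (objective k - objective (Suc k))"
proof (cases "even k")
  case True
  then show ?thesis using even_step[of k] assms objective_Suc_le[of k] by auto
next
  case False
  then have "even (Suc k)" by simp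
  then show ?thesis using even_step[of "Suc k"] assms by (auto simp: objective_def)
qed

lemma second_player_gap:
  assumes "b \<in> B"
  shows "f (as k) (bs k) \<le> f (as k) b + (objective k - objective (Suc k))"
proof (cases "even k")
  case True
  then have "odd (Suc k)" by simp
  then show ?thesis using odd_step[of "Suc k"] assms by (auto simp: objective_def)
next
  case False
  then show ?thesis using odd_step[of k] assms objective_Suc_le[of k] by auto
qed

theorem eventually_eps_optimal:
  assumes "\<epsilon> > 0"
  shows "\<exists>K. \<forall>k\<ge>K. (\<forall>a\<in>A. f (as k) (bs k) \<le> f a (bs k) + \<epsilon>) \<and>
                     (\<forall>b\<in>B. f (as k) (bs k) \<le> f (as k) b + \<epsilon>)"
proof -
  obtain N where N: "\<And>k. k \<ge> N \<Longrightarrow> \<bar>objective k - objective (Suc k)\<bar> < \<epsilon>"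
    using objective_decrease_tendsto_zero assms unfolding LIMSEQ_def dist_real_def by auto
  have "(\<forall>a\<in>A. f (as k) (bs k) \<le> f a (bs k) + \<epsilon>) \<and> (\<forall>b\<in>B. f (as k) (bs k) \<le> f (as k) b + \<epsilon>)"
    if "k \<ge> Suc N" for k
    using first_player_gap[of k] second_player_gap[of _ k] N[of k] that by fastforce
  then show ?thesis by blast
qed

end

lemma abs_xlnx_ratio_le_one:
  fixes a b c :: real
  assumes "0 \<le> a" "a \<le> b" "a \<le> c" "b \<le> 1" "c \<le> 1"
  shows "\<bar>if a = 0 then 0 else a * ln (a / (b * c))\<bar> \<le> 1"
proof (cases "a = 0")
  case False
  then have a: "a > 0" and bc: "b > 0" "c > 0" using assms by auto
  define t where "t = a / (b * c)"
  have t: "t > 0" using a bc by (simp add: t_def)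
  have "a * ln t \<le> a * (t - 1)"
    using ln_le_minus_one[OF t] a by (simp add: mult_left_mono)
  also have "\<dots> \<le> a * t" using a by simp
  also have "a * t = (a * a) / (b * c)" by (simp add: t_def)
  also have "\<dots> \<le> 1"
    using mult_mono[of a b a c] assms bc by simp
  finally have upper: "a * ln t \<le> 1" .
  have "1 - 1 / t \<le> ln t"
    using ln_le_minus_one[of "1 / t"] t by (simp add: ln_div)
  then have "a * (1 - 1 / t) \<le> a * ln t" using a by (simp add: mult_left_mono)
  moreover have "a * (1 - 1 / t) = a - b * c" using a bc by (simp add: t_def field_simps)
  moreover have "b * c \<le> 1" using assms bc by (simp add: mult_le_one)
  ultimately have "-1 \<le> a * ln t" using a by linarith
  with upper False show ?thesis by (simp add: t_def)
qed simp

lemma sum_P_w: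
  assumes "(\<Sum>x\<in>UNIV. \<Sum>z\<in>UNIV. \<Sum>w\<in>UNIV. p x z w) = 1"
  shows "(\<Sum>w\<in>UNIV. P_w p w) = 1"
proof -
  have "(\<Sum>w\<in>UNIV. P_w p w) = (\<Sum>w\<in>UNIV. \<Sum>x\<in>UNIV. \<Sum>z\<in>UNIV. p x z w)"
    unfolding P_w_def by (rule sum.cong[OF refl], rule sum.swap)
  also have "\<dots> = (\<Sum>x\<in>UNIV. \<Sum>w\<in>UNIV. \<Sum>z\<in>UNIV. p x z w)" by (rule sum.swap)
  also have "\<dots> = (\<Sum>x\<in>UNIV. \<Sum>z\<in>UNIV. \<Sum>w\<in>UNIV. p x z w)"
    by (rule sum.cong[OF refl], rule sum.swap)
  finally show ?thesis using assms by simp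
qed

lemma P_w_le_one:
  assumes "\<forall>x z w. 0 \<le> p x z w" "(\<Sum>x\<in>UNIV. \<Sum>z\<in>UNIV. \<Sum>w\<in>UNIV. p x z w) = 1"
  shows "P_w p w \<le> 1"
proof -
  have "0 \<le> P_w p w'" for w'
    unfolding P_w_def using assms(1) by (intro sum_nonneg) auto
  then have "P_w p w \<le> (\<Sum>w\<in>UNIV. P_w p w)" by (intro member_le_sum) auto
  then show ?thesis using sum_P_w[OF assms(2)] by simp
qed

context
  fixes p :: "'x::finite \<Rightarrow> 'x \<Rightarrow> 'w::finite \<Rightarrow> real" and \<alpha> :: "'y::finite \<Rightarrow> 'x \<Rightarrow> 'w \<Rightarrow> real"
  assumes p_nonneg: "\<forall>x z w. 0 \<le> p x z w"
    and \<alpha>: "\<alpha> \<in> sender_policies"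
begin

lemma P_yw_nonneg: "0 \<le> P_yw p \<alpha> y w"
  using p_nonneg \<alpha> unfolding P_yw_def sender_policies_def by (intro sum_nonneg) auto

lemma P_yw_le_P_w: "P_yw p \<alpha> y w \<le> P_w p w"
  using p_nonneg \<alpha> unfolding P_yw_def P_w_def sender_policies_def
  by (intro sum_mono) (simp add: mult_left_le_one_le)

lemma P_yw_le_P_y: "P_yw p \<alpha> y w \<le> P_y p \<alpha> y"
  unfolding P_y_def by (rule member_le_sum) (auto simp: P_yw_nonneg)

lemma P_y_le_one:
  assumes "(\<Sum>x\<in>UNIV. \<Sum>z\<in>UNIV. \<Sum>w\<in>UNIV. p x z w) = 1"
  shows "P_y p \<alpha> y \<le> 1"
proof -
  have "P_y p \<alpha> y \<le> (\<Sum>w\<in>UNIV. P_w p w)" unfolding P_y_def by (intro sum_mono P_yw_le_P_w)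
  then show ?thesis using sum_P_w[OF assms] by simp
qed

lemma abs_zeta_le:
  assumes "(\<Sum>x\<in>UNIV. \<Sum>z\<in>UNIV. \<Sum>w\<in>UNIV. p x z w) = 1"
  shows "\<bar>zeta p \<alpha>\<bar> \<le> real (card (UNIV :: 'y set)) * real (card (UNIV :: 'w set))"
proof -
  have "\<bar>zeta p \<alpha>\<bar> \<le> (\<Sum>y\<in>UNIV. \<Sum>w\<in>UNIV. \<bar>if P_yw p \<alpha> y w = 0 then 0
          else P_yw p \<alpha> y w * ln (P_yw p \<alpha> y w / (P_y p \<alpha> y * P_w p w))\<bar>)"
    unfolding zeta_def by (rule order_trans[OF sum_abs sum_mono[OF sum_abs]])
  also have "\<dots> \<le> (\<Sum>y\<in>(UNIV::'y set). \<Sum>w\<in>(UNIV::'w set). 1)"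
    using P_yw_nonneg P_yw_le_P_y P_yw_le_P_w P_y_le_one[OF assms] P_w_le_one[OF p_nonneg assms]
    by (intro sum_mono abs_xlnx_ratio_le_one) auto
  finally show ?thesis by simp
qed

end

lemma xi_nonneg:
  assumes "\<forall>x z w. 0 \<le> p x z w" "\<forall>x xh. 0 \<le> d x xh"
    and "\<alpha> \<in> sender_policies" "\<beta> \<in> receiver_policies"
  shows "0 \<le> xi p d \<alpha> \<beta>"
  using assms unfolding xi_def sender_policies_def receiver_policies_def
  by (intro sum_nonneg mult_nonneg_nonneg) auto

lemma sender_cost_lower_bound:
  fixes p :: "'x::finite \<Rightarrow> 'x \<Rightarrow> 'w::finite \<Rightarrow> real" and \<alpha> :: "'y::finite \<Rightarrow> 'x \<Rightarrow> 'w \<Rightarrow> real"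
  assumes "\<forall>x z w. 0 \<le> p x z w" "(\<Sum>x\<in>UNIV. \<Sum>z\<in>UNIV. \<Sum>w\<in>UNIV. p x z w) = 1"
    and "\<forall>x xh. 0 \<le> d x xh" "\<alpha> \<in> sender_policies" "\<beta> \<in> receiver_policies"
  shows "- (\<bar>\<rho>\<bar> * (real (card (UNIV :: 'y set)) * real (card (UNIV :: 'w set)))) \<le> sender_cost p d \<rho> \<alpha> \<beta>"
proof -
  have "\<bar>\<rho> * zeta p \<alpha>\<bar> \<le> \<bar>\<rho>\<bar> * (real (card (UNIV :: 'y set)) * real (card (UNIV :: 'w set)))"
    unfolding abs_mult using abs_zeta_le assms by (intro mult_left_mono) auto
  moreover have "0 \<le> xi p d \<alpha> \<beta>" using xi_nonneg assms by blast
  ultimately show ?thesis unfolding sender_cost_def by linarith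
qed

lemma receiver_cost_eq: "receiver_cost p d \<alpha> \<beta> = sender_cost p d \<rho> \<alpha> \<beta> - \<rho> * zeta p \<alpha>"
  by (simp add: receiver_cost_def sender_cost_def)

theorem mainTheorem5:
  fixes p :: "'x::finite \<Rightarrow> 'x \<Rightarrow> 'w::finite \<Rightarrow> real"
    and d :: "'x \<Rightarrow> 'x \<Rightarrow> real"
    and \<rho> :: real
    and \<alpha>s :: "nat \<Rightarrow> ('y::finite \<Rightarrow> 'x \<Rightarrow> 'w \<Rightarrow> real)"
    and \<beta>s :: "nat \<Rightarrow> ('x \<Rightarrow> 'y \<Rightarrow> real)"
  assumes p_nonneg: "\<forall>x z w. 0 \<le> p x z w"
    and p_sum: "(\<Sum>x\<in>UNIV. \<Sum>z\<in>UNIV. \<Sum>w\<in>UNIV. p x z w) = 1"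
    and d_nonneg: "\<forall>x xh. 0 \<le> d x xh"
    and init: "\<alpha>s 0 \<in> sender_policies" "\<beta>s 0 \<in> receiver_policies"
    and even_step: "\<And>k. k \<ge> 1 \<Longrightarrow> even k \<Longrightarrow>
        \<alpha>s k \<in> sender_policies \<and>
        (\<forall>\<alpha>\<in>sender_policies. sender_cost p d \<rho> (\<alpha>s k) (\<beta>s (k - 1)) \<le> sender_cost p d \<rho> \<alpha> (\<beta>s (k - 1))) \<and>
        \<beta>s k = \<beta>s (k - 1)"
    and odd_step: "\<And>k. odd k \<Longrightarrow>
        \<beta>s k \<in> receiver_policies \<and>
        (\<forall>\<beta>\<in>receiver_policies. receiver_cost p d (\<alpha>s (k - 1)) (\<beta>s k) \<le> receiver_cost p d (\<alpha>s (k - 1)) \<beta>) \<and>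
        \<alpha>s k = \<alpha>s (k - 1)"
  shows "\<forall>\<epsilon>>0. \<exists>K::nat. \<forall>k\<ge>K. (\<alpha>s k, \<beta>s k) \<in> eps_nash p d \<rho> \<epsilon>"
proof -
  interpret alternating_minimization sender_policies receiver_policies "sender_cost p d \<rho>"
    "- (\<bar>\<rho>\<bar> * (real (card (UNIV :: 'y set)) * real (card (UNIV :: 'w set))))" \<alpha>s \<beta>s
    using sender_cost_lower_bound[OF p_nonneg p_sum d_nonneg] init even_step odd_step
    by unfold_locales (auto simp: receiver_cost_eq[where \<rho> = \<rho>])
  show ?thesis
  proof (intro allI impI)
    fix \<epsilon> :: real assume "\<epsilon> > 0"
    then obtain K where "\<forall>k\<ge>K.
        (\<forall>a\<in>sender_policies. sender_cost p d \<rho> (\<alpha>s k) (\<beta>s k) \<le> sender_cost p d \<rho> a (\<beta>s k) + \<epsilon>) \<and>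
        (\<forall>b\<in>receiver_policies. sender_cost p d \<rho> (\<alpha>s k) (\<beta>s k) \<le> sender_cost p d \<rho> (\<alpha>s k) b + \<epsilon>)"
      using eventually_eps_optimal by blast
    then show "\<exists>K. \<forall>k\<ge>K. (\<alpha>s k, \<beta>s k) \<in> eps_nash p d \<rho> \<epsilon>"
      using iterates_in by (auto simp: eps_nash_def receiver_cost_eq[where \<rho> = \<rho>])
  qed
qed

end
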